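(* Fix $a\in(0,1/2)$ and $b\in(0,1)$. There exist an absolute constant $C\in(0,1)$ and constants $K,c_1,c_2>0$ depending only on $a,b$ such that for every spread process with parameters $(G,r,T,a,b)$ and every $t\ge1$, $$\big(1-e^{-c_1t^{c_2}}\big)\frac{V_G(r,\lfloor bt-Kt^{1-C}\rfloor)}{V_G(r,t)}\ \le\ \mathbb{E}[\lambda_{G,r}(t)]\ \le\ \frac{V_G(r,\lfloor bt+Kt^{1-C}\rfloor)}{V_G(r,t)}+e^{-c_1t^{c_2}},$$ with the convention $V_G(r,\rho)=0$ for $\rho<0$.
   Context: Spread process. Fix $a,b\in[0,1]$. Let $G=(V,E)$ be a connected, locally finite, undirected graph (finite or countably infinite), $r\in V$ a root, and $T$ a BFS spanning tree of $G$ rooted at $r$ (i.e. $d_T(r,v)=d_G(r,v)$), oriented away from $r$, with parent $p(v)$ for $v\ne r$. The spread process with parameters $(G,r,T,a,b)$ is the random sequence $f_t:V\to\{+1,-1,\bot\}$: $f_t(r)=+1$ for all $t$; $f_0(v)=\bot$ for $v\ne r$; for $t\ge1$ and each $v\ne r$ independently: if $f_{t-1}(v)=\bot\ne f_{t-1}(p(v))$ then $f_t(v)=f_{t-1}(p(v))$ w.p. $1-a$ and $-f_{t-1}(p(v))$ w.p. $a$; if $f_{t-1}(v)\ne\bot$ then $f_t(v)=f_{t-1}(p(v))$ w.p. $b$ and $f_{t-1}(v)$ w.p. $1-b$; if $f_{t-1}(v)=f_{t-1}(p(v))=\bot$ then $f_t(v)=\bot$. Volume: $B_{\rho,G}(v)=\{u:d_G(v,u)\le\rho\}$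 and $V_G(v,\rho)=|B_{\rho,G}(v)|$. Note $\{v:f_t(v)\ne\bot\}=B_{t,G}(r)$. Opinion bias: $\lambda_{G,r}(t)=\dfrac{|\{v:f_t(v)=+1\}|-|\{v:f_t(v)=-1\}|}{|\{v:f_t(v)\ne\bot\}|}$. *)

theory Defs
  imports "HOL-Probability.Probability"
begin

text \<open>Opinions: Pos = +1, Neg = -1, Und = undecided (bottom).\<close>
datatype opinion = Pos | Neg | Und

fun flip :: "opinion \<Rightarrow> opinion" where
  "flip Pos = Neg" | "flip Neg = Pos" | "flip Und = Und"

definition undirected_graph :: "nat set \<Rightarrow> (nat \<times> nat) set \<Rightarrow> bool" where
  "undirected_graph V E \<longleftrightarrow> E \<subseteq> V \<times> V \<and> sym E"

definition connected_graph :: "nat set \<Rightarrow> (nat \<times> nat) set \<Rightarrow> bool" where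
  "connected_graph V E \<longleftrightarrow> V \<noteq> {} \<and> (\<forall>u\<in>V. \<forall>w\<in>V. (u, w) \<in> E\<^sup>*)"

definition locally_finite :: "nat set \<Rightarrow> (nat \<times> nat) set \<Rightarrow> bool" where
  "locally_finite V E \<longleftrightarrow> (\<forall>v\<in>V. finite {u. (v, u) \<in> E})"

definition gdist :: "(nat \<times> nat) set \<Rightarrow> nat \<Rightarrow> nat \<Rightarrow> nat" where
  "gdist E u v = (LEAST n. (u, v) \<in> E ^^ n)"

definition gball :: "nat set \<Rightarrow> (nat \<times> nat) set \<Rightarrow> nat \<Rightarrow> nat \<Rightarrow> nat set" where
  "gball V E v \<rho> = {u \<in> V. gdist E v u \<le> \<rho>}"

definition gvol :: "nat set \<Rightarrow> (nat \<times> nat) set \<Rightarrow> nat \<Rightarrow> int \<Rightarrow> nat" where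
  "gvol V E v \<rho> = (if \<rho> < 0 then 0 else card (gball V E v (nat \<rho>)))"

text \<open>A BFS spanning tree rooted at r, given by its parent map p:
  every non-root vertex is joined in G to its parent, which is one step closer to r.\<close>
definition bfs_tree :: "nat set \<Rightarrow> (nat \<times> nat) set \<Rightarrow> nat \<Rightarrow> (nat \<Rightarrow> nat) \<Rightarrow> bool" where
  "bfs_tree V E r p \<longleftrightarrow> r \<in> V \<and>
     (\<forall>v \<in> V - {r}. p v \<in> V \<and> (p v, v) \<in> E \<and> gdist E r (p v) + 1 = gdist E r v)"

definition spread_step :: "nat set \<Rightarrow> (nat \<Rightarrow> nat) \<Rightarrow> nat \<Rightarrow> real \<Rightarrow> real \<Rightarrow>
    (nat \<Rightarrow> opinion) \<Rightarrow> (nat \<Rightarrow> opinion) pmf" where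
  "spread_step V p r a b f =
     Pi_pmf {v \<in> V. v = r \<or> f v \<noteq> Und \<or> f (p v) \<noteq> Und} Und
       (\<lambda>v. if v = r then return_pmf Pos
            else if f v = Und then
              (if f (p v) = Und then return_pmf Und
               else map_pmf (\<lambda>x. if x then flip (f (p v)) else f (p v)) (bernoulli_pmf a))
            else map_pmf (\<lambda>x. if x then f (p v) else f v) (bernoulli_pmf b))"

fun spread :: "nat set \<Rightarrow> (nat \<Rightarrow> nat) \<Rightarrow> nat \<Rightarrow> real \<Rightarrow> real \<Rightarrow> nat \<Rightarrow> (nat \<Rightarrow> opinion) pmf" where
  "spread V p r a b 0 = return_pmf ((\<lambda>_. Und)(r := Pos))"
| "spread V p r a b (Suc t) = bind_pmf (spread V p r a b t) (spread_step V p r a b)"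

definition bias :: "(nat \<Rightarrow> opinion) \<Rightarrow> real" where
  "bias f = (real (card {v. f v = Pos}) - real (card {v. f v = Neg})) / real (card {v. f v \<noteq> Und})"

end

theory Submission
  imports Defs
begin

text \<open>
  By linearity, E[bias] is the average over the ball B_t(r) of the expected opinions
  x_t(v) = E[f_t(v)], and these satisfy a linear recursion: x_{t+1}(v) = b x_t(p v) + (1-b) x_t(v)
  for an already informed vertex and x_{t+1}(v) = (1-2a) x_t(p v) for a newly informed one.
  Thus x_t(v) behaves like the probability that a lazy walk, stepping towards the root with
  probability b, has covered the distance d(v) in t steps. Exponential moments make this
  precise: 1 - x_t(v) \<le> e^{\<lambda> d(v)} (b e^{-\<lambda>} + 1 - b)^t and
  x_t(v) \<le> e^{-\<lambda> d(v)} (b e^{\<lambda>} + 1 - b)^t, the noise factor 1 - 2a being absorbed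
  as long as \<lambda> \<le> a. With \<lambda> = a t^{-1/4} these Chernoff bounds show x_t(v) \<ge> 1 - e^{-a \<surd>t}
  when d(v) \<le> bt - 2t^{3/4} and x_t(v) \<le> e^{-a \<surd>t} when d(v) > bt + 2t^{3/4}, which gives the
  theorem with C = 1/4, K = 2, c1 = a and c2 = 1/2.
\<close>

lemma gdist_self [simp]: "gdist E r r = 0"
  unfolding gdist_def by (rule Least_eq_0) simp

lemma bfs_tree_parent:
  assumes "bfs_tree V E r p" "v \<in> V" "v \<noteq> r"
  shows "p v \<in> V" "(p v, v) \<in> E" "gdist E r v = gdist E r (p v) + 1"
  using assms by (auto simp: bfs_tree_def)

lemma gball_mono: "m \<le> n \<Longrightarrow> gball V E r m \<subseteq> gball V E r n"
  by (auto simp: gball_def)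

lemma root_in_gball: "bfs_tree V E r p \<Longrightarrow> r \<in> gball V E r n"
  by (simp add: gball_def bfs_tree_def)

lemma gball_0: "bfs_tree V E r p \<Longrightarrow> gball V E r 0 = {r}"
  using bfs_tree_parent(3) root_in_gball by (fastforce simp: gball_def)

lemma parent_in_gball:
  assumes "bfs_tree V E r p" "v \<in> gball V E r (Suc n)" "v \<noteq> r"
  shows "p v \<in> gball V E r n"
  using assms bfs_tree_parent[of V E r p v] by (auto simp: gball_def)

lemma finite_gball:
  assumes bfs: "bfs_tree V E r p" and lf: "locally_finite V E"
  shows "finite (gball V E r n)"
proof (induction n)
  case 0
  show ?case using gball_0[OF bfs] by simp
next
  case (Suc n)
  have "gball V E r (Suc n) \<subseteq> {r} \<union> (\<Union>u\<in>gball V E r n. {w. (u, w) \<in> E})"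
    using parent_in_gball[OF bfs] bfs_tree_parent(2)[OF bfs] by (fastforce simp: gball_def)
  moreover have "finite (\<Union>u\<in>gball V E r n. {w. (u, w) \<in> E})"
    using Suc lf by (auto simp: locally_finite_def gball_def)
  ultimately show ?case using finite_subset by blast
qed

lemma spread_step_domain:
  assumes bfs: "bfs_tree V E r p" and g: "\<And>v. g v \<noteq> Und \<longleftrightarrow> v \<in> gball V E r t"
  shows "{v \<in> V. v = r \<or> g v \<noteq> Und \<or> g (p v) \<noteq> Und} = gball V E r (Suc t)"
proof -
  have "v \<in> gball V E r (Suc t) \<longleftrightarrow> v = r \<or> g v \<noteq> Und \<or> g (p v) \<noteq> Und" if "v \<in> V" for v
    using that bfs_tree_parent[OF bfs that] root_in_gball[OF bfs] unfolding g
    by (cases "v = r") (auto simp: gball_def)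
  then show ?thesis by (auto simp: gball_def)
qed

lemma flip_eq_Und_iff [simp]: "flip x = Und \<longleftrightarrow> x = Und"
  by (cases x) auto

definition spread_update :: "(nat \<Rightarrow> nat) \<Rightarrow> nat \<Rightarrow> real \<Rightarrow> real \<Rightarrow>
    (nat \<Rightarrow> opinion) \<Rightarrow> nat \<Rightarrow> opinion pmf" where
  "spread_update p r a b f v =
     (if v = r then return_pmf Pos
      else if f v = Und then
        (if f (p v) = Und then return_pmf Und
         else map_pmf (\<lambda>x. if x then flip (f (p v)) else f (p v)) (bernoulli_pmf a))
      else map_pmf (\<lambda>x. if x then f (p v) else f v) (bernoulli_pmf b))"

lemma spread_step_component:
  assumes domain: "{v \<in> V. v = r \<or> g v \<noteq> Und \<or> g (p v) \<noteq> Und} = S" and S: "finite S"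
  shows "map_pmf (\<lambda>f. f v) (spread_step V p r a b g) =
    (if v \<in> S then spread_update p r a b g v else return_pmf Und)"
proof -
  have "spread_step V p r a b g = Pi_pmf S Und (spread_update p r a b g)"
    unfolding spread_step_def spread_update_def domain ..
  then show ?thesis by (simp only: Pi_pmf_component[OF S])
qed

lemma spread_step_support:
  assumes bfs: "bfs_tree V E r p" and lf: "locally_finite V E"
    and g: "\<And>v. g v \<noteq> Und \<longleftrightarrow> v \<in> gball V E r t"
    and f: "f \<in> set_pmf (spread_step V p r a b g)"
  shows "f v \<noteq> Und \<longleftrightarrow> v \<in> gball V E r (Suc t)"
proof -
  note domain = spread_step_domain[OF bfs g]
  have "f v \<in> set_pmf (map_pmf (\<lambda>f. f v) (spread_step V p r a b g))"
    using f by simp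
  then have fv: "f v \<in> set_pmf
      (if v \<in> gball V E r (Suc t) then spread_update p r a b g v else return_pmf Und)"
    unfolding spread_step_component[OF domain finite_gball[OF bfs lf]] .
  have "g (p v) \<noteq> Und" if "v \<in> gball V E r (Suc t)" "v \<noteq> r"
  proof (cases "g v = Und")
    case False
    then show ?thesis using that parent_in_gball[OF bfs] g gball_mono[of t "Suc t"] by blast
  qed (use that domain in blast)
  with fv show ?thesis
    by (cases "v \<in> gball V E r (Suc t)") (auto simp: spread_update_def split: if_splits)
qed

lemma spread_support:
  assumes bfs: "bfs_tree V E r p" and lf: "locally_finite V E"
    and f: "f \<in> set_pmf (spread V p r a b t)"
  shows "f v \<noteq> Und \<longleftrightarrow> v \<in> gball V E r t"
  using f
proof (induction t arbitrary: f v)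
  case 0
  then show ?case using gball_0[OF bfs] by auto
next
  case (Suc t)
  then obtain g where "g \<in> set_pmf (spread V p r a b t)" "f \<in> set_pmf (spread_step V p r a b g)"
    by auto
  with Suc.IH show ?case by (intro spread_step_support[OF bfs lf]) auto
qed

fun opinion_val :: "opinion \<Rightarrow> real" where
  "opinion_val Pos = 1" | "opinion_val Neg = -1" | "opinion_val Und = 0"

lemma abs_opinion_val_le_1 [simp]: "\<bar>opinion_val x\<bar> \<le> 1"
  by (cases x) auto

lemma opinion_val_flip [simp]: "opinion_val (flip x) = - opinion_val x"
  by (cases x) auto

lemma integrable_measure_pmf_bounded:
  "(\<And>x. \<bar>h x\<bar> \<le> B) \<Longrightarrow> integrable (measure_pmf M) (h :: _ \<Rightarrow> real)"
  by (intro measure_pmf.integrable_const_bound[where B = B]) auto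

lemma expectation_bind_pmf:
  fixes h :: "'b \<Rightarrow> real"
  assumes "\<And>y. \<bar>h y\<bar> \<le> B"
  shows "measure_pmf.expectation (bind_pmf M N) h =
    measure_pmf.expectation M (\<lambda>x. measure_pmf.expectation (N x) h)"
  using measurable_measure_pmf[of N] assms unfolding measure_pmf_bind
  by (subst integral_bind[where K = "count_space UNIV" and B = B and B' = 1])
    (auto intro: measure_pmf.finite_measure)

lemma expectation_spread_update:
  assumes "0 \<le> a" "a \<le> 1" "0 \<le> b" "b \<le> 1"
  shows "measure_pmf.expectation (spread_update p r a b g v) opinion_val =
    (if v = r then 1 else if g v \<noteq> Und then b * opinion_val (g (p v)) + (1 - b) * opinion_val (g v)
     else (1 - 2 * a) * opinion_val (g (p v)))"
  using assms by (auto simp: spread_update_def algebra_simps)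

lemma expectation_spread_step_opinion:
  assumes domain: "{v \<in> V. v = r \<or> g v \<noteq> Und \<or> g (p v) \<noteq> Und} = S" and S: "finite S"
    and v: "v \<in> V" and ab: "0 \<le> a" "a \<le> 1" "0 \<le> b" "b \<le> 1"
  shows "measure_pmf.expectation (spread_step V p r a b g) (\<lambda>f. opinion_val (f v)) =
    (if v = r then 1 else if g v \<noteq> Und then b * opinion_val (g (p v)) + (1 - b) * opinion_val (g v)
     else (1 - 2 * a) * opinion_val (g (p v)))"
proof -
  have "measure_pmf.expectation (spread_step V p r a b g) (\<lambda>f. opinion_val (f v)) =
      measure_pmf.expectation (map_pmf (\<lambda>f. f v) (spread_step V p r a b g)) opinion_val"
    by simp
  then show ?thesis
    using spread_step_component[OF domain S] expectation_spread_update[OF ab] domain v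
    by (auto split: if_splits)
qed

definition expected_opinion :: "nat set \<Rightarrow> (nat \<Rightarrow> nat) \<Rightarrow> nat \<Rightarrow> real \<Rightarrow> real \<Rightarrow> nat \<Rightarrow> nat \<Rightarrow> real"
  where "expected_opinion V p r a b t v =
    measure_pmf.expectation (spread V p r a b t) (\<lambda>f. opinion_val (f v))"

lemma expected_opinion_0: "expected_opinion V p r a b 0 v = (if v = r then 1 else 0)"
  by (simp add: expected_opinion_def)

lemma expected_opinion_Suc:
  assumes bfs: "bfs_tree V E r p" and lf: "locally_finite V E"
    and ab: "0 \<le> a" "a \<le> 1" "0 \<le> b" "b \<le> 1" and v: "v \<in> V"
  shows "expected_opinion V p r a b (Suc t) v =
    (if v = r then 1
     else if v \<in> gball V E r t
       then b * expected_opinion V p r a b t (p v) + (1 - b) * expected_opinion V p r a b t v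
     else (1 - 2 * a) * expected_opinion V p r a b t (p v))"
proof -
  let ?x = "\<lambda>g. if v = r then 1 else if v \<in> gball V E r t
     then b * opinion_val (g (p v)) + (1 - b) * opinion_val (g v)
     else (1 - 2 * a) * opinion_val (g (p v))"
  have "expected_opinion V p r a b (Suc t) v = measure_pmf.expectation (spread V p r a b t)
      (\<lambda>g. measure_pmf.expectation (spread_step V p r a b g) (\<lambda>f. opinion_val (f v)))"
    unfolding expected_opinion_def by (simp add: expectation_bind_pmf[where B = 1])
  also have "\<dots> = measure_pmf.expectation (spread V p r a b t) ?x"
  proof (intro integral_cong_AE AE_pmfI)
    fix g assume "g \<in> set_pmf (spread V p r a b t)"
    then have g: "\<And>v. g v \<noteq> Und \<longleftrightarrow> v \<in> gball V E r t"
      using spread_support[OF bfs lf] by blast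
    show "measure_pmf.expectation (spread_step V p r a b g) (\<lambda>f. opinion_val (f v)) = ?x g"
      using expectation_spread_step_opinion[OF spread_step_domain[OF bfs g] finite_gball[OF bfs lf] v ab]
        g[of v]
      by simp
  qed auto
  also have "\<dots> = (if v = r then 1
     else if v \<in> gball V E r t
       then b * expected_opinion V p r a b t (p v) + (1 - b) * expected_opinion V p r a b t v
     else (1 - 2 * a) * expected_opinion V p r a b t (p v))"
    unfolding expected_opinion_def
    by (auto simp: integrable_measure_pmf_bounded[OF abs_opinion_val_le_1] intro!: integral_add)
  finally show ?thesis .
qed

lemma expected_opinion_bounds:
  assumes bfs: "bfs_tree V E r p" and lf: "locally_finite V E"
    and ab: "0 \<le> a" "a \<le> 1/2" "0 \<le> b" "b \<le> 1" and v: "v \<in> V"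
  shows "0 \<le> expected_opinion V p r a b t v \<and> expected_opinion V p r a b t v \<le> 1"
  using v
proof (induction t arbitrary: v)
  case 0
  then show ?case by (simp add: expected_opinion_0)
next
  case (Suc t)
  let ?x = "expected_opinion V p r a b t"
  show ?case
  proof (cases "v = r")
    case False
    have "p v \<in> V" using bfs_tree_parent(1)[OF bfs Suc.prems False] .
    then have "0 \<le> ?x (p v)" "?x (p v) \<le> 1" "0 \<le> ?x v" "?x v \<le> 1"
      using Suc by auto
    moreover have "b * ?x (p v) + (1 - b) * ?x v \<le> b * 1 + (1 - b) * 1"
      using calculation ab by (intro add_mono mult_left_mono) auto
    moreover have "(1 - 2 * a) * ?x (p v) \<le> 1 * 1"
      using calculation ab by (intro mult_mono) auto
    ultimately show ?thesis
      using expected_opinion_Suc[OF bfs lf _ _ _ _ Suc.prems, of a b t] ab False by auto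
  qed (use expected_opinion_Suc[OF bfs lf _ _ _ _ Suc.prems] ab in simp)
qed

lemma one_minus_expected_opinion_le:
  fixes lam :: real
  assumes bfs: "bfs_tree V E r p" and lf: "locally_finite V E"
    and ab: "0 \<le> a" "a \<le> 1/2" "0 \<le> b" "b \<le> 1" and lam: "0 \<le> lam"
    and v: "v \<in> V" "gdist E r v \<le> t"
  shows "1 - expected_opinion V p r a b t v \<le> exp (lam * gdist E r v) * (b * exp (- lam) + (1 - b)) ^ t"
  using v
proof (induction t arbitrary: v)
  case 0
  then have "v = r" using gball_0[OF bfs] by (auto simp: gball_def)
  then show ?case by (simp add: expected_opinion_0)
next
  case (Suc t)
  let ?x = "expected_opinion V p r a b t" and ?mu = "b * exp (- lam) + (1 - b)"
  have mu: "0 \<le> ?mu" using ab by simp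
  show ?case
  proof (cases "v = r")
    case True
    then show ?thesis using expected_opinion_Suc[OF bfs lf _ _ _ _ Suc.prems(1)] ab mu by simp
  next
    case False
    note parent = bfs_tree_parent[OF bfs Suc.prems(1) False]
    show ?thesis
    proof (cases "v \<in> gball V E r t")
      case True
      then have "gdist E r v \<le> t" by (simp add: gball_def)
      then have "1 - ?x (p v) \<le> exp (lam * gdist E r (p v)) * ?mu ^ t"
        and "1 - ?x v \<le> exp (lam * gdist E r v) * ?mu ^ t"
        using Suc.IH[OF parent(1)] Suc.IH[OF Suc.prems(1)] parent(3) by auto
      then have "b * (1 - ?x (p v)) + (1 - b) * (1 - ?x v)
          \<le> b * (exp (lam * gdist E r (p v)) * ?mu ^ t) + (1 - b) * (exp (lam * gdist E r v) * ?mu ^ t)"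
        using ab by (intro add_mono mult_left_mono) auto
      also have "\<dots> = exp (lam * gdist E r v) * ?mu ^ Suc t"
        unfolding parent(3) by (simp add: algebra_simps exp_add exp_minus)
      finally show ?thesis
        using expected_opinion_Suc[OF bfs lf _ _ _ _ Suc.prems(1), of a b t] ab False True
        by (simp add: algebra_simps)
    next
      case False
      with Suc.prems have d: "gdist E r v = Suc t" by (simp add: gball_def)
      have "1 - expected_opinion V p r a b (Suc t) v \<le> 1"
        using expected_opinion_Suc[OF bfs lf _ _ _ _ Suc.prems(1), of a b t] False \<open>v \<noteq> r\<close> ab
          expected_opinion_bounds[OF bfs lf ab parent(1), of t] by simp
      also have "1 \<le> (exp lam * ?mu) ^ Suc t"
        using ab lam mult_left_mono[of 1 "exp lam" "1 - b"]
        by (intro one_le_power) (simp add: algebra_simps exp_minus)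
      also have "\<dots> = exp (lam * gdist E r v) * ?mu ^ Suc t"
        unfolding d power_mult_distrib exp_of_nat_mult[symmetric] by (simp add: mult.commute)
      finally show ?thesis .
    qed
  qed
qed

lemma expected_opinion_le:
  fixes lam :: real
  assumes bfs: "bfs_tree V E r p" and lf: "locally_finite V E"
    and ab: "0 \<le> a" "a \<le> 1/2" "0 \<le> b" "b \<le> 1" and lam: "0 \<le> lam"
    and noise: "(1 - 2 * a) * exp lam \<le> b * exp lam + (1 - b)" and v: "v \<in> V"
  shows "expected_opinion V p r a b t v \<le> exp (- lam * gdist E r v) * (b * exp lam + (1 - b)) ^ t"
  using v
proof (induction t arbitrary: v)
  case 0
  then show ?case by (simp add: expected_opinion_0)
next
  case (Suc t)
  let ?x = "expected_opinion V p r a b t" and ?nu = "b * exp lam + (1 - b)"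
  have nu: "1 \<le> ?nu" using ab lam mult_left_mono[of 1 "exp lam" b] by simp
  show ?case
  proof (cases "v = r")
    case True
    then show ?thesis
      using expected_opinion_Suc[OF bfs lf _ _ _ _ Suc.prems] ab one_le_power[OF nu, of "Suc t"]
      by (simp del: power_Suc)
  next
    case False
    note parent = bfs_tree_parent[OF bfs Suc.prems False]
    have parent_exp: "exp (- lam * gdist E r (p v)) = exp (- lam * gdist E r v) * exp lam"
      unfolding parent(3) by (simp add: exp_add[symmetric] algebra_simps)
    have IH_parent: "?x (p v) \<le> exp (- lam * gdist E r (p v)) * ?nu ^ t"
      using Suc.IH parent(1) .
    show ?thesis
    proof (cases "v \<in> gball V E r t")
      case True
      have "b * ?x (p v) + (1 - b) * ?x v
          \<le> b * (exp (- lam * gdist E r (p v)) * ?nu ^ t) + (1 - b) * (exp (- lam * gdist E r v) * ?nu ^ t)"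
        using IH_parent Suc ab by (intro add_mono mult_left_mono) auto
      also have "\<dots> = exp (- lam * gdist E r v) * ?nu ^ Suc t"
        unfolding parent_exp by (simp add: algebra_simps)
      finally show ?thesis
        using expected_opinion_Suc[OF bfs lf _ _ _ _ Suc.prems, of a b t] ab False True by simp
    next
      case outside: False
      have "(1 - 2 * a) * ?x (p v) \<le> (1 - 2 * a) * (exp (- lam * gdist E r (p v)) * ?nu ^ t)"
        using IH_parent ab by (intro mult_left_mono) auto
      also have "\<dots> = exp (- lam * gdist E r v) * ?nu ^ t * ((1 - 2 * a) * exp lam)"
        unfolding parent_exp by (simp add: algebra_simps)
      also have "\<dots> \<le> exp (- lam * gdist E r v) * ?nu ^ Suc t"
        using noise nu by (simp add: mult_left_mono)
      finally show ?thesis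
        using expected_opinion_Suc[OF bfs lf _ _ _ _ Suc.prems, of a b t] ab False outside by simp
    qed
  qed
qed

lemma exp_le_one_plus_self_plus_square:
  fixes x :: real
  assumes "\<bar>x\<bar> \<le> 1"
  shows "exp x \<le> 1 + x + x\<^sup>2"
proof (cases "0 \<le> x")
  case True
  then show ?thesis using assms exp_bound by simp
next
  case False
  have "(1 + x + x\<^sup>2) * (1 - x) = 1 - x * (x * x)"
    by (simp add: power2_eq_square algebra_simps)
  then have "1 \<le> (1 + x + x\<^sup>2) * (1 - x)"
    using False mult_nonpos_nonneg[of x "x * x"] by simp
  then have "1 / (1 - x) \<le> 1 + x + x\<^sup>2"
    using False by (simp add: divide_le_eq)
  moreover have "exp x \<le> 1 / (1 - x)"
    using False exp_ge_add_one_self[of "- x"] by (simp add: exp_minus field_simps)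
  ultimately show ?thesis by linarith
qed

lemma bernoulli_mgf_le:
  fixes x b :: real
  assumes "\<bar>x\<bar> \<le> 1" "0 \<le> b"
  shows "b * exp x + (1 - b) \<le> exp (b * (x + x\<^sup>2))"
proof -
  have "b * exp x + (1 - b) \<le> exp (b * (exp x - 1))"
    using exp_ge_add_one_self[of "b * (exp x - 1)"] by (simp add: algebra_simps)
  also have "\<dots> \<le> exp (b * (x + x\<^sup>2))"
    using exp_le_one_plus_self_plus_square[OF assms(1)] assms(2) by (simp add: mult_left_mono)
  finally show ?thesis .
qed

text \<open>The left-hand side is e^{-xd} E[e^{x X}] for X ~ Bin(n, b): a Chernoff bound for a deviation
  of 2 n^{3/4} from the mean.\<close>

lemma tilted_tail_le:
  fixes x d :: real
  assumes a: "0 \<le> a" "a \<le> 1" and b: "0 \<le> b" "b \<le> 1" and n: "1 \<le> real n"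
    and x: "\<bar>x\<bar> = a / real n powr (1/4)"
    and d: "2 * \<bar>x\<bar> * real n powr (3/4) \<le> x * (d - b * real n)"
  shows "exp (- x * d) * (b * exp x + (1 - b)) ^ n \<le> exp (- (a * real n powr (1/2)))"
proof -
  define s where "s = real n powr (1/4)"
  have s: "1 \<le> s" unfolding s_def using n by (rule ge_one_powr_ge_zero) simp
  have s_powers: "s^2 = real n powr (1/2)" "s^3 = real n powr (3/4)" "s^4 = real n"
    unfolding s_def using n by (simp_all add: powr_power)
  have x_s: "\<bar>x\<bar> * s = a" using s unfolding x s_def[symmetric] by simp
  have "\<bar>x\<bar> \<le> \<bar>x\<bar> * s" using s mult_left_mono[of 1 s "\<bar>x\<bar>"] by simp
  then have "\<bar>x\<bar> \<le> 1" using x_s a by simp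
  then have "(b * exp x + (1 - b)) ^ n \<le> exp (b * (x + x\<^sup>2)) ^ n"
    using b by (intro power_mono bernoulli_mgf_le) auto
  then have "exp (- x * d) * (b * exp x + (1 - b)) ^ n \<le> exp (- x * d) * exp (real n * (b * (x + x\<^sup>2)))"
    by (simp add: exp_of_nat_mult)
  also have "\<dots> = exp (- x * (d - b * real n) + b * (x\<^sup>2 * s^4))"
    by (simp only: exp_add[symmetric] s_powers(3)) (simp add: algebra_simps)
  also have "\<dots> \<le> exp (- 2 * a * s^2 + b * a^2 * s^2)"
  proof -
    have "x\<^sup>2 * s\<^sup>2 = a\<^sup>2"
      using x_s by (metis power2_abs power_mult_distrib)
    then have "2 * \<bar>x\<bar> * s^3 = 2 * a * s^2" "x\<^sup>2 * s^4 = a^2 * s^2"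
      using x_s by (simp_all add: power2_eq_square power3_eq_cube power4_eq_xxxx mult.assoc)
    moreover have "2 * \<bar>x\<bar> * s^3 \<le> x * (d - b * real n)"
      using d by (simp add: s_powers)
    ultimately show ?thesis by simp
  qed
  also have "\<dots> \<le> exp (- (a * s^2))"
  proof -
    have "b * a^2 \<le> 1 * a"
      using a b by (intro mult_mono) (auto simp: power2_eq_square mult_left_le)
    then have "b * a^2 * s^2 \<le> a * s^2" by (simp add: mult_right_mono)
    then show ?thesis by simp
  qed
  finally show ?thesis by (simp add: s_powers)
qed

lemma flip_noise_exp_le:
  fixes a b lam :: real
  assumes "0 \<le> a" "a \<le> 1/2" "0 \<le> b" "b \<le> 1" "0 \<le> lam" "lam \<le> a"
  shows "(1 - 2 * a) * exp lam \<le> b * exp lam + (1 - b)"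
proof (cases "1 - 2 * a - b \<le> 0")
  case True
  then have "(1 - 2 * a - b) * exp lam \<le> 1 - b"
    using assms mult_nonpos_nonneg[of "1 - 2 * a - b" "exp lam"] by simp
  then show ?thesis by (simp add: algebra_simps)
next
  case False
  have "exp lam \<le> 1 + lam + lam\<^sup>2" using assms by (intro exp_bound) auto
  also have "\<dots> \<le> 1 + 2 * a"
    using assms mult_left_mono[of lam 1 lam] by (simp add: power2_eq_square)
  finally have "(1 - 2 * a - b) * exp lam \<le> (1 - 2 * a - b) * (1 + 2 * a)"
    using False by (intro mult_left_mono) auto
  also have "\<dots> \<le> 1 - b"
    using assms by (simp add: algebra_simps)
  finally show ?thesis by (simp add: algebra_simps)
qed

lemma expected_opinion_far_le:
  assumes bfs: "bfs_tree V E r p" and lf: "locally_finite V E"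
    and a: "0 \<le> a" "a \<le> 1/2" and b: "0 \<le> b" "b \<le> 1" and t: "1 \<le> t" and v: "v \<in> V"
    and far: "b * real t + 2 * real t powr (3/4) < gdist E r v"
  shows "expected_opinion V p r a b t v \<le> exp (- (a * real t powr (1/2)))"
proof -
  define lam where "lam = a / real t powr (1/4)"
  have lam: "0 \<le> lam" "lam \<le> a"
    using a t by (auto simp: lam_def divide_le_eq ge_one_powr_ge_zero mult_le_cancel_left1)
  have "expected_opinion V p r a b t v \<le> exp (- lam * gdist E r v) * (b * exp lam + (1 - b)) ^ t"
    using expected_opinion_le[OF bfs lf a b lam(1) flip_noise_exp_le[OF a b lam] v] .
  also have "\<dots> \<le> exp (- (a * real t powr (1/2)))"
  proof (rule tilted_tail_le)
    show "2 * \<bar>lam\<bar> * real t powr (3/4) \<le> lam * (real (gdist E r v) - b * real t)"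
      using far lam(1) mult_left_mono[of "2 * real t powr (3/4)" "real (gdist E r v) - b * real t" lam]
      by (simp add: algebra_simps)
  qed (use a b t lam in \<open>auto simp: lam_def\<close>)
  finally show ?thesis .
qed

lemma expected_opinion_near_ge:
  assumes bfs: "bfs_tree V E r p" and lf: "locally_finite V E"
    and a: "0 \<le> a" "a \<le> 1/2" and b: "0 \<le> b" "b \<le> 1" and t: "1 \<le> t" and v: "v \<in> V"
    and near: "real (gdist E r v) \<le> b * real t - 2 * real t powr (3/4)"
  shows "1 - exp (- (a * real t powr (1/2))) \<le> expected_opinion V p r a b t v"
proof -
  define lam where "lam = a / real t powr (1/4)"
  have lam: "0 \<le> lam" "lam \<le> a"
    using a t by (auto simp: lam_def divide_le_eq ge_one_powr_ge_zero mult_le_cancel_left1)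
  have "b * real t \<le> real t" using b mult_right_mono[of b 1 "real t"] by simp
  then have "real (gdist E r v) \<le> real t"
    using near powr_ge_zero[of "real t" "3/4"] by linarith
  then have "1 - expected_opinion V p r a b t v
      \<le> exp (- (- lam) * gdist E r v) * (b * exp (- lam) + (1 - b)) ^ t"
    using one_minus_expected_opinion_le[OF bfs lf a b lam(1) v] by simp
  also have "\<dots> \<le> exp (- (a * real t powr (1/2)))"
  proof (rule tilted_tail_le)
    show "2 * \<bar>- lam\<bar> * real t powr (3/4) \<le> - lam * (real (gdist E r v) - b * real t)"
      using near lam(1) mult_left_mono[of "2 * real t powr (3/4)" "b * real t - real (gdist E r v)" lam]
      by (simp add: algebra_simps)
  qed (use a b t lam in \<open>auto simp: lam_def\<close>)
  finally show ?thesis by simp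
qed

lemma opinion_val_eq: "opinion_val x = (if x = Pos then 1 else 0) - (if x = Neg then 1 else 0)"
  by (cases x) auto

lemma bias_eq_average:
  assumes B: "finite B" and f: "\<And>v. f v \<noteq> Und \<longleftrightarrow> v \<in> B"
  shows "bias f = (\<Sum>v\<in>B. opinion_val (f v)) / real (card B)"
proof -
  have "{v. f v \<noteq> Und} = B" "{v. f v = Pos} = {v \<in> B. f v = Pos}" "{v. f v = Neg} = {v \<in> B. f v = Neg}"
    using f by force+
  moreover have "(\<Sum>v\<in>B. opinion_val (f v)) = real (card {v \<in> B. f v = Pos}) - real (card {v \<in> B. f v = Neg})"
    using B by (simp add: opinion_val_eq sum_subtractf sum.inter_filter[symmetric] of_nat_sum)
  ultimately show ?thesis by (simp add: bias_def)
qed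

lemma expectation_bias:
  assumes bfs: "bfs_tree V E r p" and lf: "locally_finite V E"
  shows "measure_pmf.expectation (spread V p r a b t) bias
     = (\<Sum>v\<in>gball V E r t. expected_opinion V p r a b t v) / real (card (gball V E r t))"
proof -
  let ?B = "gball V E r t"
  have "measure_pmf.expectation (spread V p r a b t) bias
      = measure_pmf.expectation (spread V p r a b t) (\<lambda>f. (\<Sum>v\<in>?B. opinion_val (f v)) / real (card ?B))"
    using spread_support[OF bfs lf]
    by (intro integral_cong_AE AE_pmfI bias_eq_average[OF finite_gball[OF bfs lf]]) auto
  also have "\<dots> = (\<Sum>v\<in>?B. expected_opinion V p r a b t v) / real (card ?B)"
    unfolding expected_opinion_def
    by (simp add: integrable_measure_pmf_bounded[OF abs_opinion_val_le_1])
  finally show ?thesis .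
qed

lemma average_le_card_ratio_add:
  fixes x :: "'a \<Rightarrow> real"
  assumes B: "finite B" "finite B'" and le_1: "\<And>v. v \<in> B \<Longrightarrow> x v \<le> 1"
    and small: "\<And>v. v \<in> B - B' \<Longrightarrow> x v \<le> eps" and eps: "0 \<le> eps"
  shows "(\<Sum>v\<in>B. x v) / real (card B) \<le> real (card B') / real (card B) + eps"
proof -
  have "(\<Sum>v\<in>B. x v) = (\<Sum>v\<in>B \<inter> B'. x v) + (\<Sum>v\<in>B - B'. x v)"
    using B(1) by (rule sum.Int_Diff)
  also have "\<dots> \<le> real (card (B \<inter> B')) + real (card (B - B')) * eps"
    using sum_mono[of "B \<inter> B'" x "\<lambda>_. 1"] sum_mono[of "B - B'" x "\<lambda>_. eps"] le_1 small by auto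
  also have "\<dots> \<le> real (card B') + real (card B) * eps"
    using B eps by (intro add_mono mult_right_mono) (auto intro: card_mono)
  finally show ?thesis
    using eps by (cases "card B = 0") (auto simp: field_simps)
qed

lemma card_ratio_le_average:
  fixes x :: "'a \<Rightarrow> real"
  assumes B: "finite B" "B' \<subseteq> B" and nonneg: "\<And>v. v \<in> B \<Longrightarrow> 0 \<le> x v"
    and large: "\<And>v. v \<in> B' \<Longrightarrow> c \<le> x v"
  shows "c * (real (card B') / real (card B)) \<le> (\<Sum>v\<in>B. x v) / real (card B)"
proof -
  have "c * real (card B') \<le> (\<Sum>v\<in>B'. x v)"
    using sum_mono[of B' "\<lambda>_. c" x] large by (simp add: mult.commute)
  also have "\<dots> \<le> (\<Sum>v\<in>B. x v)"
    using B nonneg by (intro sum_mono2) auto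
  finally show ?thesis by (simp add: divide_right_mono)
qed

lemma expected_bias_le:
  assumes bfs: "bfs_tree V E r p" and lf: "locally_finite V E"
    and a: "0 \<le> a" "a \<le> 1/2" and b: "0 \<le> b" "b \<le> 1" and t: "1 \<le> t"
  shows "measure_pmf.expectation (spread V p r a b t) bias
    \<le> real (gvol V E r \<lfloor>b * real t + 2 * real t powr (3/4)\<rfloor>) / real (gvol V E r (int t))
      + exp (- (a * real t powr (1/2)))"
proof -
  define D where "D = \<lfloor>b * real t + 2 * real t powr (3/4)\<rfloor>"
  have "0 \<le> D" unfolding D_def using b by simp
  have far: "expected_opinion V p r a b t v \<le> exp (- (a * real t powr (1/2)))"
    if "v \<in> gball V E r t - gball V E r (nat D)" for v
  proof (rule expected_opinion_far_le[OF bfs lf a b t])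
    show "v \<in> V" using that by (simp add: gball_def)
    have "nat D < gdist E r v" using that by (auto simp: gball_def)
    then have "D + 1 \<le> int (gdist E r v)" using \<open>0 \<le> D\<close> by arith
    then show "b * real t + 2 * real t powr (3/4) < real (gdist E r v)"
      unfolding D_def by linarith
  qed
  have "measure_pmf.expectation (spread V p r a b t) bias
      \<le> real (card (gball V E r (nat D))) / real (card (gball V E r t)) + exp (- (a * real t powr (1/2)))"
    unfolding expectation_bias[OF bfs lf]
    using expected_opinion_bounds[OF bfs lf a b] far finite_gball[OF bfs lf]
    by (intro average_le_card_ratio_add) (auto simp: gball_def)
  then show ?thesis using \<open>0 \<le> D\<close> by (simp add: gvol_def D_def)
qed

lemma expected_bias_ge:
  assumes bfs: "bfs_tree V E r p" and lf: "locally_finite V E"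
    and a: "0 \<le> a" "a \<le> 1/2" and b: "0 \<le> b" "b \<le> 1" and t: "1 \<le> t"
  shows "(1 - exp (- (a * real t powr (1/2)))) *
      (real (gvol V E r \<lfloor>b * real t - 2 * real t powr (3/4)\<rfloor>) / real (gvol V E r (int t)))
    \<le> measure_pmf.expectation (spread V p r a b t) bias"
proof -
  define D where "D = \<lfloor>b * real t - 2 * real t powr (3/4)\<rfloor>"
  have nonneg: "0 \<le> expected_opinion V p r a b t v" if "v \<in> gball V E r t" for v
    using that expected_opinion_bounds[OF bfs lf a b] by (simp add: gball_def)
  show ?thesis
  proof (cases "D < 0")
    case True
    then show ?thesis
      using nonneg unfolding expectation_bias[OF bfs lf] D_def[symmetric]
      by (simp add: gvol_def sum_nonneg)
  next
    case False
    have "real_of_int D \<le> b * real t - 2 * real t powr (3/4)" unfolding D_def by linarith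
    moreover have "b * real t \<le> real t" using b mult_right_mono[of b 1 "real t"] by simp
    ultimately have "nat D \<le> t" using False powr_ge_zero[of "real t" "3/4"] by linarith
    then have sub: "gball V E r (nat D) \<subseteq> gball V E r t" by (rule gball_mono)
    have near: "1 - exp (- (a * real t powr (1/2))) \<le> expected_opinion V p r a b t v"
      if "v \<in> gball V E r (nat D)" for v
    proof (rule expected_opinion_near_ge[OF bfs lf a b t])
      show "v \<in> V" using that by (simp add: gball_def)
      show "real (gdist E r v) \<le> b * real t - 2 * real t powr (3/4)"
        using that False \<open>real_of_int D \<le> b * real t - 2 * real t powr (3/4)\<close>
        by (simp add: gball_def) linarith
    qed
    show ?thesis
      unfolding expectation_bias[OF bfs lf] D_def[symmetric]
      using False card_ratio_le_average[OF finite_gball[OF bfs lf] sub nonneg near]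
      by (simp add: gvol_def)
  qed
qed

theorem mainTheorem12:
  "\<exists>C::real. 0 < C \<and> C < 1 \<and>
     (\<forall>a b :: real. 0 < a \<and> a < 1/2 \<and> 0 < b \<and> b < 1 \<longrightarrow>
       (\<exists>K c1 c2 :: real. K > 0 \<and> c1 > 0 \<and> c2 > 0 \<and>
         (\<forall>V E r p (t::nat).
            undirected_graph V E \<and> connected_graph V E \<and> locally_finite V E \<and>
            bfs_tree V E r p \<and> t \<ge> 1 \<longrightarrow>
              (1 - exp (- (c1 * real t powr c2))) *
                 (real (gvol V E r \<lfloor>b * real t - K * real t powr (1 - C)\<rfloor>) / real (gvol V E r (int t)))
                \<le> measure_pmf.expectation (spread V p r a b t) bias
              \<and> measure_pmf.expectation (spread V p r a b t) bias
                \<le> real (gvol V E r \<lfloor>b * real t + K * real t powr (1 - C)\<rfloor>) / real (gvol V E r (int t))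
                   + exp (- (c1 * real t powr c2)))))"
proof (rule exI[of _ "1/4"], intro conjI allI impI, goal_cases)
  case (3 a b)
  then have a: "0 \<le> a" "a \<le> 1/2" and b: "0 \<le> b" "b \<le> 1" and "0 < a" by auto
  show ?case
  proof (rule exI[of _ 2], rule exI[of _ a], rule exI[of _ "1/2"], intro conjI allI impI)
    fix V E r p and t :: nat
    assume "undirected_graph V E \<and> connected_graph V E \<and> locally_finite V E \<and> bfs_tree V E r p \<and> t \<ge> 1"
    then have bfs: "bfs_tree V E r p" and lf: "locally_finite V E" and t: "1 \<le> t" by auto
    show "(1 - exp (- (a * real t powr (1/2)))) *
        (real (gvol V E r \<lfloor>b * real t - 2 * real t powr (1 - 1/4)\<rfloor>) / real (gvol V E r (int t)))
      \<le> measure_pmf.expectation (spread V p r a b t) bias"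
      using expected_bias_ge[OF bfs lf a b t] by simp
    show "measure_pmf.expectation (spread V p r a b t) bias
      \<le> real (gvol V E r \<lfloor>b * real t + 2 * real t powr (1 - 1/4)\<rfloor>) / real (gvol V E r (int t))
        + exp (- (a * real t powr (1/2)))"
      using expected_bias_le[OF bfs lf a b t] by simp
  qed (use \<open>0 < a\<close> in simp_all)
qed simp_all

end
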